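(* Let $H$ be a divisible group all of whose elements are almost right Engel. Then for any $g,x\in H$ there is a positive integer $n(x,g)$ such that $[[g,{}_nx],g]=1$ for all $n\ge n(x,g)$.
   Context: Commutators: $a^b=b^{-1}ab$, $[a,b]=a^{-1}b^{-1}ab$, and $[a,{}_nb]=[\dots[[a,b],b],\dots,b]$ with $b$ repeated $n$ times. An element $g$ of a group $G$ is almost right Engel if there is a finite set $\mathscr R\subseteq G$ such that for every $x\in G$ there is a positive integer $r(x,g)$ with $[g,{}_nx]\in\mathscr R$ for all $n\ge r(x,g)$. A group $H$ is divisible if for every $h\in H$ and every positive integer $k$ there is $x\in H$ with $x^k=h$. *)

theory Defs
  imports "HOL-Algebra.Group"
begin

definition comm :: "('a, 'b) monoid_scheme \<Rightarrow> 'a \<Rightarrow> 'a \<Rightarrow> 'a" where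
  "comm G a b = inv\<^bsub>G\<^esub> a \<otimes>\<^bsub>G\<^esub> inv\<^bsub>G\<^esub> b \<otimes>\<^bsub>G\<^esub> a \<otimes>\<^bsub>G\<^esub> b"

fun iter_comm :: "('a, 'b) monoid_scheme \<Rightarrow> 'a \<Rightarrow> nat \<Rightarrow> 'a \<Rightarrow> 'a" where
  "iter_comm G a 0 b = a"
| "iter_comm G a (Suc n) b = comm G (iter_comm G a n b) b"

definition almost_right_engel :: "('a, 'b) monoid_scheme \<Rightarrow> 'a \<Rightarrow> bool" where
  "almost_right_engel G g \<longleftrightarrow>
     (\<exists>R. finite R \<and> R \<subseteq> carrier G \<and>
        (\<forall>x\<in>carrier G. \<exists>r::nat. r > 0 \<and> (\<forall>n\<ge>r. iter_comm G g n x \<in> R)))"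

definition divisible_group :: "('a, 'b) monoid_scheme \<Rightarrow> bool" where
  "divisible_group G \<longleftrightarrow>
     (\<forall>h\<in>carrier G. \<forall>k::nat. k > 0 \<longrightarrow> (\<exists>x\<in>carrier G. x [^]\<^bsub>G\<^esub> k = h))"

end

theory Submission
  imports Defs
begin

text \<open>Choose \<open>h\<close> with \<open>h [^] s! = g\<close>, where \<open>s = card R\<close>. Conjugation by \<open>h\<close> fixes \<open>g\<close>,
  so the conjugate of \<open>[g,\<^sub>nx]\<close> by \<open>h\<^sup>i\<close> is \<open>[g,\<^sub>ny]\<close> for the corresponding conjugate \<open>y\<close> of \<open>x\<close>;
  hence for large \<open>n\<close> all \<open>s + 1\<close> conjugates by \<open>h\<^sup>0, \<dots>, h\<^sup>s\<close> lie in \<open>R\<close>. By the pigeonhole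
  principle two of them coincide, so some \<open>h\<^sup>d\<close> with \<open>0 < d \<le> s\<close> commutes with \<open>[g,\<^sub>nx]\<close>;
  as \<open>d\<close> divides \<open>s!\<close>, so does \<open>g\<close>.\<close>

definition conjg :: "('a, 'b) monoid_scheme \<Rightarrow> 'a \<Rightarrow> 'a \<Rightarrow> 'a" where
  "conjg G a y = inv\<^bsub>G\<^esub> a \<otimes>\<^bsub>G\<^esub> y \<otimes>\<^bsub>G\<^esub> a"

lemma almost_right_engel_eventually:
  assumes "almost_right_engel G g"
  obtains R where "finite R"
    and "\<forall>y\<in>carrier G. eventually (\<lambda>n. iter_comm G g n y \<in> R) sequentially"
proof -
  obtain R where "finite R" and R: "\<forall>y\<in>carrier G. \<exists>r. r > 0 \<and> (\<forall>n\<ge>r. iter_comm G g n y \<in> R)"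
    using assms unfolding almost_right_engel_def by blast
  have "\<forall>y\<in>carrier G. eventually (\<lambda>n. iter_comm G g n y \<in> R) sequentially"
  proof
    fix y assume "y \<in> carrier G"
    with R obtain r where "\<forall>n\<ge>r. iter_comm G g n y \<in> R" by blast
    then show "eventually (\<lambda>n. iter_comm G g n y \<in> R) sequentially"
      by (auto intro: eventually_sequentiallyI)
  qed
  with \<open>finite R\<close> show thesis by (rule that)
qed

context group
begin

lemma comm_closed [simp]: "a \<in> carrier G \<Longrightarrow> b \<in> carrier G \<Longrightarrow> comm G a b \<in> carrier G"
  by (simp add: comm_def)

lemma iter_comm_closed [simp]:
  "a \<in> carrier G \<Longrightarrow> b \<in> carrier G \<Longrightarrow> iter_comm G a n b \<in> carrier G"
  by (induction n) auto

lemma comm_eq_one_of_commute: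
  assumes "y \<in> carrier G" "z \<in> carrier G" "y \<otimes> z = z \<otimes> y"
  shows "comm G y z = \<one>"
proof -
  have "comm G y z = inv (z \<otimes> y) \<otimes> (y \<otimes> z)"
    using assms(1,2) by (simp add: comm_def inv_mult_group m_assoc)
  then show ?thesis
    using assms by simp
qed

lemma conjg_closed [simp]: "a \<in> carrier G \<Longrightarrow> y \<in> carrier G \<Longrightarrow> conjg G a y \<in> carrier G"
  by (simp add: conjg_def)

lemma conjg_mult:
  "\<lbrakk>a \<in> carrier G; y \<in> carrier G; z \<in> carrier G\<rbrakk> \<Longrightarrow>
   conjg G a (y \<otimes> z) = conjg G a y \<otimes> conjg G a z"
  by (simp add: conjg_def m_assoc[symmetric]) (simp add: m_assoc)

lemma conjg_inv: "a \<in> carrier G \<Longrightarrow> y \<in> carrier G \<Longrightarrow> conjg G a (inv y) = inv (conjg G a y)"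
  by (simp add: conjg_def inv_mult_group m_assoc)

lemma conjg_comm:
  "\<lbrakk>a \<in> carrier G; y \<in> carrier G; z \<in> carrier G\<rbrakk> \<Longrightarrow>
   conjg G a (comm G y z) = comm G (conjg G a y) (conjg G a z)"
  by (simp add: comm_def conjg_mult conjg_inv)

lemma conjg_iter_comm:
  "\<lbrakk>a \<in> carrier G; y \<in> carrier G; z \<in> carrier G\<rbrakk> \<Longrightarrow>
   conjg G a (iter_comm G y n z) = iter_comm G (conjg G a y) n (conjg G a z)"
  by (induction n) (auto simp: conjg_comm)

lemma conjg_conjg:
  "\<lbrakk>a \<in> carrier G; b \<in> carrier G; y \<in> carrier G\<rbrakk> \<Longrightarrow>
   conjg G b (conjg G a y) = conjg G (a \<otimes> b) y"
  by (simp add: conjg_def inv_mult_group m_assoc)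

lemma conjg_cancel:
  "\<lbrakk>a \<in> carrier G; y \<in> carrier G; z \<in> carrier G\<rbrakk> \<Longrightarrow> conjg G a y = conjg G a z \<longleftrightarrow> y = z"
  by (simp add: conjg_def)

lemma conjg_eq_self_iff:
  assumes "a \<in> carrier G" "y \<in> carrier G"
  shows "conjg G a y = y \<longleftrightarrow> a \<otimes> y = y \<otimes> a"
proof -
  have "conjg G a y = y \<longleftrightarrow> a \<otimes> conjg G a y = a \<otimes> y"
    using assms by simp
  also have "a \<otimes> conjg G a y = y \<otimes> a"
    using assms by (simp add: conjg_def m_assoc[symmetric])
  finally show ?thesis by auto
qed

lemma commute_pow_of_dvd:
  fixes d m :: nat
  assumes "h \<in> carrier G" "w \<in> carrier G" "h [^] d \<otimes> w = w \<otimes> h [^] d" "d dvd m"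
  shows "h [^] m \<otimes> w = w \<otimes> h [^] m"
proof -
  from \<open>d dvd m\<close> obtain q where "m = d * q" by blast
  then have "h [^] m = (h [^] d) [^] q"
    using assms(1) by (simp add: nat_pow_pow)
  then show ?thesis
    using group_commutes_pow[OF assms(3) nat_pow_closed assms(2)] assms(1) by simp
qed

lemma commute_pow_of_conjg_pows_in_finite:
  assumes "finite R" "h \<in> carrier G" "w \<in> carrier G"
    and in_R: "\<forall>i\<le>card R. conjg G (h [^] i) w \<in> R"
  obtains d where "0 < d" "d \<le> card R" "h [^] d \<otimes> w = w \<otimes> h [^] d"
proof -
  let ?f = "\<lambda>i. conjg G (h [^] i) w"
  have "?f ` {..card R} \<subseteq> R"
    using in_R by auto
  then have "card (?f ` {..card R}) < card {..card R}"
    using card_mono[OF \<open>finite R\<close>] by (simp add: le_imp_less_Suc)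
  then have "\<not> inj_on ?f {..card R}"
    by (rule pigeonhole)
  then obtain i j where ij: "i < j" "j \<le> card R" "?f i = ?f j"
    unfolding inj_on_def by (metis atMost_iff linorder_neqE_nat)
  define d where "d = j - i"
  have "h [^] j = h [^] d \<otimes> h [^] i"
    using \<open>h \<in> carrier G\<close> ij(1) by (simp add: nat_pow_mult d_def)
  then have "conjg G (h [^] i) (conjg G (h [^] d) w) = conjg G (h [^] i) w"
    using assms(2,3) ij(3) by (simp add: conjg_conjg)
  then have "conjg G (h [^] d) w = w"
    using assms(2,3) by (simp add: conjg_cancel)
  then have "h [^] d \<otimes> w = w \<otimes> h [^] d"
    using assms(2,3) by (simp add: conjg_eq_self_iff)
  moreover have "0 < d" "d \<le> card R"
    using ij by (auto simp: d_def)
  ultimately show thesis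
    using that by blast
qed

lemma comm_eq_one_of_conjg_pows_in_finite:
  assumes "finite R" "h \<in> carrier G" "w \<in> carrier G" "h [^] (fact (card R) :: nat) = g"
    and "\<forall>i\<le>card R. conjg G (h [^] i) w \<in> R"
  shows "comm G w g = \<one>"
proof -
  obtain d where "0 < d" "d \<le> card R" and commute_d: "h [^] d \<otimes> w = w \<otimes> h [^] d"
    by (rule commute_pow_of_conjg_pows_in_finite[OF assms(1-3,5)])
  then have "d dvd fact (card R)"
    by (simp add: dvd_fact)
  from commute_pow_of_dvd[OF assms(2,3) commute_d this] have "g \<otimes> w = w \<otimes> g"
    using assms(4) by simp
  then show ?thesis
    using assms(2-4) comm_eq_one_of_commute by auto
qed

lemma eventually_conjg_pows_iter_comm_in:
  fixes k :: nat
  assumes "g \<in> carrier G" "h \<in> carrier G" "x \<in> carrier G" "h \<otimes> g = g \<otimes> h"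
    and engel: "\<forall>y\<in>carrier G. eventually (\<lambda>n. iter_comm G g n y \<in> R) sequentially"
  shows "eventually (\<lambda>n. \<forall>i\<le>k. conjg G (h [^] i) (iter_comm G g n x) \<in> R) sequentially"
proof -
  have "conjg G (h [^] i) (iter_comm G g n x) = iter_comm G g n (conjg G (h [^] i) x)"
    for i :: nat and n
  proof -
    have "conjg G (h [^] i) g = g"
      using assms(1,2,4) by (simp add: conjg_eq_self_iff group_commutes_pow)
    then show ?thesis
      using assms(1-3) by (simp add: conjg_iter_comm)
  qed
  moreover have "eventually (\<lambda>n. \<forall>i\<in>{..k}. iter_comm G g n (conjg G (h [^] i) x) \<in> R)
      sequentially"
    using engel assms(2,3) by (intro eventually_ball_finite) auto
  ultimately show ?thesis
    by (auto elim: eventually_mono)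
qed

end

theorem lemma5p1:
  fixes H (structure)
  assumes "group H"
    and "divisible_group H"
    and "\<forall>g\<in>carrier H. almost_right_engel H g"
    and "g \<in> carrier H" and "x \<in> carrier H"
  shows "\<exists>N::nat. N > 0 \<and> (\<forall>n\<ge>N. comm H (iter_comm H g n x) g = \<one>)"
proof -
  interpret group H by fact
  from assms(3,4) have "almost_right_engel H g" ..
  then obtain R where "finite R"
    and engel: "\<forall>y\<in>carrier H. eventually (\<lambda>n. iter_comm H g n y \<in> R) sequentially"
    by (rule almost_right_engel_eventually)
  have "(0::nat) < fact (card R)"
    by simp
  then obtain h where h: "h \<in> carrier H" "h [^] (fact (card R) :: nat) = g"
    using assms(2,4) unfolding divisible_group_def by blast
  have "h \<otimes> g = g \<otimes> h"
    using group_commutes_pow[of h h "fact (card R)"] h by simp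
  then have "eventually (\<lambda>n. \<forall>i\<le>card R. conjg H (h [^] i) (iter_comm H g n x) \<in> R) sequentially"
    using eventually_conjg_pows_iter_comm_in h(1) assms(4,5) engel by blast
  moreover have "comm H w g = \<one>"
    if "w \<in> carrier H" "\<forall>i\<le>card R. conjg H (h [^] i) w \<in> R" for w
    using comm_eq_one_of_conjg_pows_in_finite \<open>finite R\<close> h that by blast
  ultimately have "eventually (\<lambda>n. comm H (iter_comm H g n x) g = \<one>) sequentially"
    by (rule eventually_mono) (simp add: assms(4,5))
  then obtain N where "\<forall>n\<ge>N. comm H (iter_comm H g n x) g = \<one>"
    unfolding eventually_sequentially by blast
  then show ?thesis
    by (intro exI[of _ "Suc N"]) auto
qed

end
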